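(* Let $\hat V$ be the $(1+\chi)\times(1+\chi)$ upper-left block of an iMPO in regular form, and let $R_0:=\mathrm{Id}_{1+\chi}$, $\hat V_0:=\hat V$, and for $n\ge1$ let $\hat V_{n-1}=\hat Q_nR_n$ be a QR decomposition, $\hat V_n:=R_n\hat Q_n$, $L_n:=R_n\cdots R_1$ ($L_0:=\mathrm{Id}$). Then for every $n\ge0$, $$\mathrm{Id}_{1+\chi}\,(T_V)^n=L_n^\dagger L_n.$$
   Context: $\mathcal A$ is the algebra of operators on $\mathbb C^q$ with inner product $\langle\hat A,\hat B\rangle=\mathrm{Tr}[\hat A^\dagger\hat B]/\mathrm{Tr}[\hat 1]$ and orthonormal basis $\{\hat O_\alpha\}$, $\hat O_0=\hat 1$. For an operator-valued matrix $\hat V=\sum_\alpha\hat O_\alpha V_\alpha$ ($(V_\alpha)_{ab}=\langle\hat O_\alpha,\hat V_{ab}\rangle$), the transfer matrix acts on square complex matrices from the left by $XT_V=\sum_\alpha V_\alpha^\dagger XV_\alpha$. An iMPO in regular form of bond dimension $\chi$ is a $(\chi+2)\times(\chi+2)$ matrix with entries in $\mathcal A$ of block form $\begin{pmatrix}\hat 1&\hat{\mathbf c}&\hat d\\0&\hat{\mathsf A}&\hat{\mathbf b}\\0&0&\hat 1\end{pmatrix}$ whose upper-left block is $\hat V=\begin{pmatrix}\hat 1&\hat{\mathbf c}\\0&\hat{\mathsf A}\end{pmatrix}$. A QR decomposition $\hat V=\hat QR$ has $\hat Q$ operator-valued with orthonormal columns, $\sum_a\langle\hat Q_{ab},\hat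 Q_{ac}\rangle=\delta_{bc}$ (equivalently $\sum_\alpha Q_\alpha^\dagger Q_\alpha=\mathrm{Id}$), and $R$ a complex upper-triangular matrix. *)

theory Defs
  imports "Jordan_Normal_Form.Schur_Decomposition"
begin

text \<open>Operators on C^q are q x q complex matrices. An operator-valued matrix is a
  matrix whose entries are such operators (type complex mat mat).\<close>

type_synonym opmat = "complex mat mat"

definition mtrace :: "complex mat \<Rightarrow> complex" where
  "mtrace A = (\<Sum>i<dim_row A. A $$ (i,i))"

definition op_inner :: "nat \<Rightarrow> complex mat \<Rightarrow> complex mat \<Rightarrow> complex" where
  "op_inner q A B = mtrace (mat_adjoint A * B) / of_nat q"

definition op_onb :: "nat \<Rightarrow> (nat \<Rightarrow> complex mat) \<Rightarrow> bool" where
  "op_onb q Ob \<longleftrightarrow> (\<forall>\<alpha><q^2. Ob \<alpha> \<in> carrier_mat q q)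
     \<and> (\<forall>\<alpha><q^2. \<forall>\<beta><q^2. op_inner q (Ob \<alpha>) (Ob \<beta>) = (if \<alpha> = \<beta> then 1 else 0))
     \<and> Ob 0 = 1\<^sub>m q"

definition is_opmat :: "nat \<Rightarrow> nat \<Rightarrow> nat \<Rightarrow> opmat \<Rightarrow> bool" where
  "is_opmat q nr nc V \<longleftrightarrow> V \<in> carrier_mat nr nc
     \<and> (\<forall>a<nr. \<forall>b<nc. V $$ (a,b) \<in> carrier_mat q q)"

definition comp :: "nat \<Rightarrow> (nat \<Rightarrow> complex mat) \<Rightarrow> opmat \<Rightarrow> nat \<Rightarrow> complex mat" where
  "comp q Ob V \<alpha> = mat (dim_row V) (dim_col V) (\<lambda>(a,b). op_inner q (Ob \<alpha>) (V $$ (a,b)))"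

text \<open>Transfer matrix acting from the left: X T_V = sum_alpha V_alpha^dagger X V_alpha.\<close>
definition transfer :: "nat \<Rightarrow> (nat \<Rightarrow> complex mat) \<Rightarrow> opmat \<Rightarrow> complex mat \<Rightarrow> complex mat" where
  "transfer q Ob V X = mat (dim_col V) (dim_col V)
     (\<lambda>(i,j). \<Sum>\<alpha><q^2. (mat_adjoint (comp q Ob V \<alpha>) * X * comp q Ob V \<alpha>) $$ (i,j))"

definition opmat_times_mat :: "nat \<Rightarrow> opmat \<Rightarrow> complex mat \<Rightarrow> opmat" where
  "opmat_times_mat q Q R = mat (dim_row Q) (dim_col R)
     (\<lambda>(a,b). mat q q (\<lambda>(i,j). \<Sum>c<dim_col Q. (Q $$ (a,c)) $$ (i,j) * R $$ (c,b)))"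

definition mat_times_opmat :: "nat \<Rightarrow> complex mat \<Rightarrow> opmat \<Rightarrow> opmat" where
  "mat_times_opmat q R Q = mat (dim_row R) (dim_col Q)
     (\<lambda>(a,b). mat q q (\<lambda>(i,j). \<Sum>c<dim_col R. R $$ (a,c) * (Q $$ (c,b)) $$ (i,j)))"

definition orthonormal_cols :: "nat \<Rightarrow> opmat \<Rightarrow> bool" where
  "orthonormal_cols q Q \<longleftrightarrow> (\<forall>b<dim_col Q. \<forall>c<dim_col Q.
     (\<Sum>a<dim_row Q. op_inner q (Q $$ (a,b)) (Q $$ (a,c))) = (if b = c then 1 else 0))"

definition is_QR :: "nat \<Rightarrow> nat \<Rightarrow> opmat \<Rightarrow> opmat \<Rightarrow> complex mat \<Rightarrow> bool" where
  "is_QR q D V Q R \<longleftrightarrow> is_opmat q D D Q \<and> orthonormal_cols q Q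
     \<and> R \<in> carrier_mat D D \<and> upper_triangular R \<and> V = opmat_times_mat q Q R"

definition regular_upper_block :: "nat \<Rightarrow> nat \<Rightarrow> opmat \<Rightarrow> bool" where
  "regular_upper_block q \<chi> V \<longleftrightarrow> is_opmat q (1+\<chi>) (1+\<chi>) V
     \<and> V $$ (0,0) = 1\<^sub>m q \<and> (\<forall>a. 1 \<le> a \<and> a < 1+\<chi> \<longrightarrow> V $$ (a,0) = 0\<^sub>m q q)"

fun Lprod :: "nat \<Rightarrow> (nat \<Rightarrow> complex mat) \<Rightarrow> nat \<Rightarrow> complex mat" where
  "Lprod D R 0 = 1\<^sub>m D"
| "Lprod D R (Suc n) = R (Suc n) * Lprod D R n"

end

theory Submission
  imports Defs
begin

text \<open>Multiplying an operator-valued matrix by a scalar matrix acts on its components: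
  (QR)_alpha = Q_alpha R and (RQ)_alpha = R Q_alpha. Hence (R^dagger X R) T_QR = R^dagger (X T_RQ) R,
  i.e. each QR step conjugates the transfer matrix by R_n, and by induction
  (L_n^dagger X L_n) T_V = L_n^dagger (X T_V_n) L_n. Parseval's identity for the basis O turns
  orthonormality of the columns of Q into Id T_Q = Id, so Id T_V_n = R_(n+1)^dagger R_(n+1), and
  induction on n gives the claim.\<close>

lemma mat_adjoint_eq_mat: "mat_adjoint A = mat (dim_col A) (dim_row A) (\<lambda>(i,j). conjugate (A $$ (j,i)))"
  by (rule eq_matI) (auto simp: mat_adjoint_def mat_of_rows_index)

lemma mat_adjoint_carrier [simp]: "A \<in> carrier_mat n m \<Longrightarrow> mat_adjoint A \<in> carrier_mat m n"
  by (auto simp: mat_adjoint_eq_mat)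

lemma mat_adjoint_mult:
  assumes "A \<in> carrier_mat n m" "B \<in> carrier_mat m k"
  shows "mat_adjoint (A * B) = mat_adjoint B * mat_adjoint (A :: complex mat)"
  by (rule eq_matI) (use assms in \<open>auto simp: mat_adjoint_eq_mat scalar_prod_def mult.commute\<close>)+

lemma mat_adjoint_one [simp]: "mat_adjoint (1\<^sub>m n :: complex mat) = 1\<^sub>m n"
  by (rule eq_matI) (auto simp: mat_adjoint_eq_mat)

lemma mat_adjoint_sandwich_mult:
  assumes "A \<in> carrier_mat n n" "B \<in> carrier_mat n n" "X \<in> carrier_mat n n"
  shows "mat_adjoint (A * B) * X * (A * B) = mat_adjoint B * (mat_adjoint A * X * A) * (B :: complex mat)"
  using assms
  by (simp add: mat_adjoint_mult[of A n n B n] assoc_mult_mat[of _ n n _ n _ n] mult_carrier_mat[of _ n n _ n])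

lemma sum_div_mod:
  fixes q :: nat
  shows "(\<Sum>k<q*q. f (k div q) (k mod q)) = (\<Sum>i<q. \<Sum>j<q. f i j :: 'a::comm_monoid_add)"
proof -
  have "a * q + b < q * q" if "a < q" "b < q" for a b
  proof -
    have "a * q + b < (a + 1) * q" using that(2) by simp
    also have "\<dots> \<le> q * q" using that(1) by (intro mult_right_mono) auto
    finally show ?thesis .
  qed
  then have "bij_betw (\<lambda>k. (k div q, k mod q)) {..<q*q} ({..<q} \<times> {..<q})"
    by (intro bij_betwI[where g="\<lambda>(i,j). i*q+j"]) (cases "q = 0"; auto simp: less_mult_imp_div_less)+
  then show ?thesis
    by (simp add: sum.reindex_bij_betw[symmetric] sum.cartesian_product)
qed

definition flat_entry :: "nat \<Rightarrow> 'a mat \<Rightarrow> nat \<Rightarrow> 'a" where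
  "flat_entry q A k = A $$ (k div q, k mod q)"

lemma op_inner_flat:
  assumes "A \<in> carrier_mat q q" "B \<in> carrier_mat q q"
  shows "op_inner q A B = (\<Sum>k<q*q. cnj (flat_entry q A k) * flat_entry q B k) / of_nat q"
proof -
  have "mtrace (mat_adjoint A * B) = (\<Sum>i<q. \<Sum>j<q. cnj (A $$ (j,i)) * B $$ (j,i))"
    using assms by (simp add: mtrace_def mat_adjoint_eq_mat scalar_prod_def atLeast0LessThan)
  also have "\<dots> = (\<Sum>j<q. \<Sum>i<q. cnj (A $$ (j,i)) * B $$ (j,i))"
    by (rule sum.swap)
  also have "\<dots> = (\<Sum>k<q*q. cnj (flat_entry q A k) * flat_entry q B k)"
    unfolding flat_entry_def by (rule sum_div_mod[symmetric])
  finally show ?thesis by (simp add: op_inner_def)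
qed

lemma op_onb_carrier: "op_onb q Ob \<Longrightarrow> \<alpha> < q^2 \<Longrightarrow> Ob \<alpha> \<in> carrier_mat q q"
  by (simp add: op_onb_def)

text \<open>The q^2 x q^2 matrix M with rows the flattened basis operators satisfies
  M M^dagger = q Id by orthonormality; a one-sided inverse of a square matrix is two-sided, so
  M^dagger M = q Id as well.\<close>
lemma op_onb_flat_columns:
  assumes q: "q \<ge> 1" and onb: "op_onb q Ob" and k: "k < q*q" and l: "l < q*q"
  shows "(\<Sum>\<alpha><q^2. cnj (flat_entry q (Ob \<alpha>) l) * flat_entry q (Ob \<alpha>) k) = (if l = k then of_nat q else 0)"
proof -
  define N where "N = q^2"
  define M where "M = mat N N (\<lambda>(\<alpha>,k). flat_entry q (Ob \<alpha>) k)"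
  define M' where "M' = mat N N (\<lambda>(k,\<alpha>). cnj (flat_entry q (Ob \<alpha>) k) / of_nat q)"
  have "M * M' = 1\<^sub>m N"
  proof (rule eq_matI)
    fix \<alpha> \<beta> assume "\<alpha> < dim_row (1\<^sub>m N)" "\<beta> < dim_col (1\<^sub>m N :: complex mat)"
    then have \<alpha>\<beta>: "\<alpha> < q^2" "\<beta> < q^2" by (auto simp: N_def)
    have "(M * M') $$ (\<alpha>,\<beta>) = (\<Sum>k<q*q. cnj (flat_entry q (Ob \<beta>) k) * flat_entry q (Ob \<alpha>) k) / of_nat q"
      using \<alpha>\<beta> by (simp add: M_def M'_def N_def scalar_prod_def atLeast0LessThan sum_divide_distrib
          power2_eq_square mult.commute del: complex_cnj_cancel_iff)
    also have "\<dots> = op_inner q (Ob \<beta>) (Ob \<alpha>)"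
      using \<alpha>\<beta> by (simp add: op_inner_flat op_onb_carrier[OF onb])
    also have "\<dots> = 1\<^sub>m N $$ (\<alpha>,\<beta>)"
      using onb \<alpha>\<beta> by (auto simp: op_onb_def N_def)
    finally show "(M * M') $$ (\<alpha>,\<beta>) = 1\<^sub>m N $$ (\<alpha>,\<beta>)" .
  qed (auto simp: M_def M'_def)
  then have "M' * M = 1\<^sub>m N"
    by (rule mat_mult_left_right_inverse[rotated 2]) (simp_all add: M_def M'_def)
  then have "(M' * M) $$ (l,k) = 1\<^sub>m N $$ (l,k)" by simp
  then have "(\<Sum>\<alpha><q^2. cnj (flat_entry q (Ob \<alpha>) l) * flat_entry q (Ob \<alpha>) k) / of_nat q = (if l = k then 1 else 0)"
    using k l by (simp add: M_def M'_def N_def scalar_prod_def atLeast0LessThan sum_divide_distrib power2_eq_square)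
  then show ?thesis
    using q by (cases "l = k") (simp_all add: divide_eq_eq)
qed

lemma op_onb_parseval:
  assumes q: "q \<ge> 1" and onb: "op_onb q Ob" and A: "A \<in> carrier_mat q q" and B: "B \<in> carrier_mat q q"
  shows "(\<Sum>\<alpha><q^2. cnj (op_inner q (Ob \<alpha>) A) * op_inner q (Ob \<alpha>) B) = op_inner q A B"
proof -
  define N where "N = q*q"
  define e where "e = (\<lambda>\<alpha>. flat_entry q (Ob \<alpha>))"
  define a where "a = flat_entry q A"
  define b where "b = flat_entry q B"
  have "(\<Sum>\<alpha><q^2. cnj (op_inner q (Ob \<alpha>) A) * op_inner q (Ob \<alpha>) B)
      = (\<Sum>\<alpha><q^2. (\<Sum>k<N. e \<alpha> k * cnj (a k)) * (\<Sum>l<N. cnj (e \<alpha> l) * b l)) / (of_nat q)^2"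
    by (simp add: op_inner_flat op_onb_carrier[OF onb] A B N_def e_def a_def b_def
        sum_divide_distrib[symmetric] power2_eq_square times_divide_times_eq)
  also have "\<dots> = (\<Sum>\<alpha><q^2. \<Sum>k<N. \<Sum>l<N. cnj (a k) * b l * (cnj (e \<alpha> l) * e \<alpha> k)) / (of_nat q)^2"
    unfolding sum_product by (simp add: mult_ac)
  also have "\<dots> = (\<Sum>k<N. \<Sum>l<N. cnj (a k) * b l * (\<Sum>\<alpha><q^2. cnj (e \<alpha> l) * e \<alpha> k)) / (of_nat q)^2"
    unfolding sum_distrib_left by (subst sum.swap) (simp add: sum.swap[of _ "{..<q^2}"])
  also have "\<dots> = (\<Sum>k<N. cnj (a k) * b k * of_nat q) / (of_nat q)^2"
    by (simp add: N_def e_def op_onb_flat_columns[OF q onb] if_distrib[of "\<lambda>x. _ * x"] cong: if_cong)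
  also have "\<dots> = op_inner q A B"
    using q by (simp add: op_inner_flat A B N_def a_def b_def sum_distrib_right[symmetric] power2_eq_square)
  finally show ?thesis .
qed

lemma is_opmatD:
  assumes "is_opmat q nr nc Q"
  shows "dim_row Q = nr" "dim_col Q = nc" "a < nr \<Longrightarrow> b < nc \<Longrightarrow> Q $$ (a,b) \<in> carrier_mat q q"
  using assms by (auto simp: is_opmat_def)

lemma op_inner_lincomb:
  assumes C: "C \<in> carrier_mat q q" and F: "\<And>c. c < n \<Longrightarrow> F c \<in> carrier_mat q q"
  shows "op_inner q C (mat q q (\<lambda>(i,j). \<Sum>c<n. F c $$ (i,j) * r c)) = (\<Sum>c<n. op_inner q C (F c) * r c)"
proof -
  have entry: "flat_entry q (mat q q (\<lambda>(i,j). \<Sum>c<n. F c $$ (i,j) * r c)) k = (\<Sum>c<n. flat_entry q (F c) k * r c)"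
    if "k < q*q" for k
    using that by (cases "q = 0") (simp_all add: flat_entry_def less_mult_imp_div_less)
  have "op_inner q C (mat q q (\<lambda>(i,j). \<Sum>c<n. F c $$ (i,j) * r c))
     = (\<Sum>k<q*q. cnj (flat_entry q C k) * (\<Sum>c<n. flat_entry q (F c) k * r c)) / of_nat q"
    unfolding op_inner_flat[OF C mat_carrier]
    by (intro arg_cong[where f="\<lambda>x. x / _"] sum.cong refl) (simp add: entry)
  also have "\<dots> = (\<Sum>c<n. \<Sum>k<q*q. cnj (flat_entry q C k) * flat_entry q (F c) k * r c) / of_nat q"
    unfolding sum_distrib_left by (subst sum.swap) (simp only: mult.assoc)
  also have "\<dots> = (\<Sum>c<n. (\<Sum>k<q*q. cnj (flat_entry q C k) * flat_entry q (F c) k) / of_nat q * r c)"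
    by (subst sum_divide_distrib) (intro sum.cong refl, simp add: sum_distrib_right)
  also have "\<dots> = (\<Sum>c<n. op_inner q C (F c) * r c)"
    by (intro sum.cong refl) (simp add: op_inner_flat[OF C F])
  finally show ?thesis .
qed

lemma dim_comp [simp]: "dim_row (comp q Ob W \<alpha>) = dim_row W" "dim_col (comp q Ob W \<alpha>) = dim_col W"
  by (simp_all add: comp_def)

lemma comp_carrier: "W \<in> carrier_mat nr nc \<Longrightarrow> comp q Ob W \<alpha> \<in> carrier_mat nr nc"
  by (simp add: comp_def carrier_matD)

lemma comp_opmat_times_mat:
  assumes Q: "is_opmat q nr m Q" and R: "R \<in> carrier_mat m nc" and O: "Ob \<alpha> \<in> carrier_mat q q"
  shows "comp q Ob (opmat_times_mat q Q R) \<alpha> = comp q Ob Q \<alpha> * R"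
proof (rule eq_matI)
  note Qdim = is_opmatD(1,2)[OF Q] and Qe = is_opmatD(3)[OF Q]
  fix a b assume "a < dim_row (comp q Ob Q \<alpha> * R)" "b < dim_col (comp q Ob Q \<alpha> * R)"
  then have ab: "a < nr" "b < nc" using Qdim R by auto
  have "comp q Ob (opmat_times_mat q Q R) \<alpha> $$ (a,b)
     = op_inner q (Ob \<alpha>) (mat q q (\<lambda>(i,j). \<Sum>c<m. Q $$ (a,c) $$ (i,j) * R $$ (c,b)))"
    using ab Qdim R by (simp add: comp_def opmat_times_mat_def)
  also have "\<dots> = (\<Sum>c<m. op_inner q (Ob \<alpha>) (Q $$ (a,c)) * R $$ (c,b))"
    by (rule op_inner_lincomb[OF O]) (simp add: Qe ab)
  also have "\<dots> = (comp q Ob Q \<alpha> * R) $$ (a,b)"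
    using ab Qdim R by (simp add: comp_def scalar_prod_def atLeast0LessThan)
  finally show "comp q Ob (opmat_times_mat q Q R) \<alpha> $$ (a,b) = (comp q Ob Q \<alpha> * R) $$ (a,b)" .
qed (use R in \<open>simp_all add: opmat_times_mat_def is_opmatD(1,2)[OF Q]\<close>)

lemma comp_mat_times_opmat:
  assumes R: "R \<in> carrier_mat nr m" and Q: "is_opmat q m nc Q" and O: "Ob \<alpha> \<in> carrier_mat q q"
  shows "comp q Ob (mat_times_opmat q R Q) \<alpha> = R * comp q Ob Q \<alpha>"
proof (rule eq_matI)
  note Qdim = is_opmatD(1,2)[OF Q] and Qe = is_opmatD(3)[OF Q]
  fix a b assume "a < dim_row (R * comp q Ob Q \<alpha>)" "b < dim_col (R * comp q Ob Q \<alpha>)"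
  then have ab: "a < nr" "b < nc" using Qdim R by auto
  have "comp q Ob (mat_times_opmat q R Q) \<alpha> $$ (a,b)
     = op_inner q (Ob \<alpha>) (mat q q (\<lambda>(i,j). \<Sum>c<m. Q $$ (c,b) $$ (i,j) * R $$ (a,c)))"
    using ab Qdim R by (simp add: comp_def mat_times_opmat_def mult.commute)
  also have "\<dots> = (\<Sum>c<m. op_inner q (Ob \<alpha>) (Q $$ (c,b)) * R $$ (a,c))"
    by (rule op_inner_lincomb[OF O]) (simp add: Qe ab)
  also have "\<dots> = (R * comp q Ob Q \<alpha>) $$ (a,b)"
    using ab Qdim R by (simp add: comp_def scalar_prod_def atLeast0LessThan mult.commute)
  finally show "comp q Ob (mat_times_opmat q R Q) \<alpha> $$ (a,b) = (R * comp q Ob Q \<alpha>) $$ (a,b)" .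
qed (use R in \<open>simp_all add: mat_times_opmat_def is_opmatD(1,2)[OF Q]\<close>)

definition mat_sum :: "nat \<Rightarrow> nat \<Rightarrow> nat \<Rightarrow> (nat \<Rightarrow> 'a::comm_monoid_add mat) \<Rightarrow> 'a mat" where
  "mat_sum nr nc N f = mat nr nc (\<lambda>(i,j). \<Sum>\<alpha><N. f \<alpha> $$ (i,j))"

lemma mat_sum_cong: "(\<And>\<alpha>. \<alpha> < N \<Longrightarrow> f \<alpha> = g \<alpha>) \<Longrightarrow> mat_sum nr nc N f = mat_sum nr nc N g"
  by (simp add: mat_sum_def)

lemma mat_sum_mult_left:
  assumes A: "A \<in> carrier_mat nr n" and f: "\<And>\<alpha>. f \<alpha> \<in> carrier_mat n nc"
  shows "mat_sum nr nc N (\<lambda>\<alpha>. A * f \<alpha>) = A * mat_sum n nc N (f :: nat \<Rightarrow> 'a::comm_semiring_0 mat)"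
proof (rule eq_matI)
  fix i j assume "i < dim_row (A * mat_sum n nc N f)" "j < dim_col (A * mat_sum n nc N f)"
  then have ij: "i < nr" "j < nc" using A by (auto simp: mat_sum_def)
  have "mat_sum nr nc N (\<lambda>\<alpha>. A * f \<alpha>) $$ (i,j) = (\<Sum>\<alpha><N. \<Sum>k<n. A $$ (i,k) * f \<alpha> $$ (k,j))"
    using ij A f by (simp add: mat_sum_def scalar_prod_def atLeast0LessThan carrier_matD[OF f])
  also have "\<dots> = (\<Sum>k<n. \<Sum>\<alpha><N. A $$ (i,k) * f \<alpha> $$ (k,j))"
    by (rule sum.swap)
  also have "\<dots> = (A * mat_sum n nc N f) $$ (i,j)"
    using ij A by (simp add: mat_sum_def scalar_prod_def atLeast0LessThan sum_distrib_left)
  finally show "mat_sum nr nc N (\<lambda>\<alpha>. A * f \<alpha>) $$ (i,j) = (A * mat_sum n nc N f) $$ (i,j)" .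
qed (use A in \<open>auto simp: mat_sum_def\<close>)

lemma mat_sum_mult_right:
  assumes B: "B \<in> carrier_mat n nc" and f: "\<And>\<alpha>. f \<alpha> \<in> carrier_mat nr n"
  shows "mat_sum nr nc N (\<lambda>\<alpha>. f \<alpha> * B) = mat_sum nr n N (f :: nat \<Rightarrow> 'a::comm_semiring_0 mat) * B"
proof (rule eq_matI)
  fix i j assume "i < dim_row (mat_sum nr n N f * B)" "j < dim_col (mat_sum nr n N f * B)"
  then have ij: "i < nr" "j < nc" using B by (auto simp: mat_sum_def)
  have "mat_sum nr nc N (\<lambda>\<alpha>. f \<alpha> * B) $$ (i,j) = (\<Sum>\<alpha><N. \<Sum>k<n. f \<alpha> $$ (i,k) * B $$ (k,j))"
    using ij B f by (simp add: mat_sum_def scalar_prod_def atLeast0LessThan carrier_matD[OF f])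
  also have "\<dots> = (\<Sum>k<n. \<Sum>\<alpha><N. f \<alpha> $$ (i,k) * B $$ (k,j))"
    by (rule sum.swap)
  also have "\<dots> = (mat_sum nr n N f * B) $$ (i,j)"
    using ij B by (simp add: mat_sum_def scalar_prod_def atLeast0LessThan sum_distrib_right)
  finally show "mat_sum nr nc N (\<lambda>\<alpha>. f \<alpha> * B) $$ (i,j) = (mat_sum nr n N f * B) $$ (i,j)" .
qed (use B in \<open>auto simp: mat_sum_def\<close>)

lemma transfer_eq_mat_sum:
  "transfer q Ob W X = mat_sum (dim_col W) (dim_col W) (q^2) (\<lambda>\<alpha>. mat_adjoint (comp q Ob W \<alpha>) * X * comp q Ob W \<alpha>)"
  by (simp add: transfer_def mat_sum_def)

lemma transfer_carrier [simp]: "transfer q Ob W X \<in> carrier_mat (dim_col W) (dim_col W)"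
  by (simp add: transfer_def)

lemma transfer_opmat_times_mat:
  assumes onb: "op_onb q Ob" and Q: "is_opmat q D D Q" and R: "R \<in> carrier_mat D D"
    and X: "X \<in> carrier_mat D D"
  shows "transfer q Ob (opmat_times_mat q Q R) X = mat_adjoint R * transfer q Ob Q X * R"
proof -
  have dims: "dim_col (opmat_times_mat q Q R) = D" "dim_col Q = D"
    using R by (simp_all add: opmat_times_mat_def is_opmatD(1,2)[OF Q])
  have C: "comp q Ob Q \<alpha> \<in> carrier_mat D D" for \<alpha>
    using Q by (simp add: is_opmat_def comp_carrier)
  have "transfer q Ob (opmat_times_mat q Q R) X
      = mat_sum D D (q^2) (\<lambda>\<alpha>. mat_adjoint R * (mat_adjoint (comp q Ob Q \<alpha>) * X * comp q Ob Q \<alpha>) * R)"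
    unfolding transfer_eq_mat_sum dims
    by (intro mat_sum_cong)
      (simp add: comp_opmat_times_mat[OF Q R] op_onb_carrier[OF onb] mat_adjoint_sandwich_mult[OF C R X])
  also have "\<dots> = mat_adjoint R * transfer q Ob Q X * R"
    using C R X unfolding transfer_eq_mat_sum dims
    by (simp add: mat_sum_mult_right[of R D D _ D] mat_sum_mult_left[of "mat_adjoint R" D D]
        mult_carrier_mat[of _ D D _ D])
  finally show ?thesis .
qed

lemma transfer_mat_times_opmat:
  assumes onb: "op_onb q Ob" and Q: "is_opmat q D D Q" and R: "R \<in> carrier_mat D D"
    and X: "X \<in> carrier_mat D D"
  shows "transfer q Ob (mat_times_opmat q R Q) X = transfer q Ob Q (mat_adjoint R * X * R)"
proof -
  have dims: "dim_col (mat_times_opmat q R Q) = D" "dim_col Q = D"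
    by (simp_all add: mat_times_opmat_def is_opmatD(1,2)[OF Q])
  have C: "comp q Ob Q \<alpha> \<in> carrier_mat D D" for \<alpha>
    using Q by (simp add: is_opmat_def comp_carrier)
  show ?thesis
    unfolding transfer_eq_mat_sum dims
    by (intro mat_sum_cong)
      (simp add: comp_mat_times_opmat[OF R Q] op_onb_carrier[OF onb] mat_adjoint_sandwich_mult[OF R C X])
qed

lemma transfer_orthonormal_cols_one:
  assumes q: "q \<ge> 1" and onb: "op_onb q Ob" and Q: "is_opmat q D D Q" and orth: "orthonormal_cols q Q"
  shows "transfer q Ob Q (1\<^sub>m D) = 1\<^sub>m D"
proof (rule eq_matI)
  note Qdim = is_opmatD(1,2)[OF Q] and Qe = is_opmatD(3)[OF Q]
  fix i j assume "i < dim_row (1\<^sub>m D :: complex mat)" "j < dim_col (1\<^sub>m D :: complex mat)"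
  then have ij: "i < D" "j < D" by auto
  have "transfer q Ob Q (1\<^sub>m D) $$ (i,j)
      = (\<Sum>\<alpha><q^2. \<Sum>a<D. cnj (op_inner q (Ob \<alpha>) (Q $$ (a,i))) * op_inner q (Ob \<alpha>) (Q $$ (a,j)))"
    using ij Qdim comp_carrier[of Q D D q Ob]
    by (simp add: transfer_def comp_def mat_adjoint_eq_mat scalar_prod_def atLeast0LessThan)
  also have "\<dots> = (\<Sum>a<D. \<Sum>\<alpha><q^2. cnj (op_inner q (Ob \<alpha>) (Q $$ (a,i))) * op_inner q (Ob \<alpha>) (Q $$ (a,j)))"
    by (rule sum.swap)
  also have "\<dots> = (\<Sum>a<D. op_inner q (Q $$ (a,i)) (Q $$ (a,j)))"
    using ij by (simp add: op_onb_parseval[OF q onb] Qe)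
  also have "\<dots> = 1\<^sub>m D $$ (i,j)"
    using orth ij Qdim unfolding orthonormal_cols_def by auto
  finally show "transfer q Ob Q (1\<^sub>m D) $$ (i,j) = 1\<^sub>m D $$ (i,j)" .
qed (simp_all add: transfer_def is_opmatD(1,2)[OF Q])

lemma transfer_QR_conj:
  assumes onb: "op_onb q Ob" and Q: "is_opmat q D D Q" and R: "R \<in> carrier_mat D D"
    and X: "X \<in> carrier_mat D D"
  shows "transfer q Ob (opmat_times_mat q Q R) (mat_adjoint R * X * R)
    = mat_adjoint R * transfer q Ob (mat_times_opmat q R Q) X * R"
  using R X by (simp add: transfer_opmat_times_mat[OF onb Q R] transfer_mat_times_opmat[OF onb Q R]
      mult_carrier_mat[of _ D D _ D])

locale QR_iteration =
  fixes q D :: nat and Ob :: "nat \<Rightarrow> complex mat" and Vs Qs :: "nat \<Rightarrow> opmat" and Rs :: "nat \<Rightarrow> complex mat"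
  assumes q_pos: "q \<ge> 1" and onb: "op_onb q Ob"
    and QR: "\<And>n. is_QR q D (Vs n) (Qs (Suc n)) (Rs (Suc n))"
    and RQ: "\<And>n. Vs (Suc n) = mat_times_opmat q (Rs (Suc n)) (Qs (Suc n))"
begin

lemma Rs_carrier: "Rs (Suc n) \<in> carrier_mat D D"
  using QR by (simp add: is_QR_def)

lemma Lprod_carrier: "Lprod D Rs n \<in> carrier_mat D D"
  by (induction n) (simp_all add: Rs_carrier mult_carrier_mat[of _ D D _ D])

lemma transfer_Lprod_conj:
  assumes X: "X \<in> carrier_mat D D"
  shows "transfer q Ob (Vs 0) (mat_adjoint (Lprod D Rs n) * X * Lprod D Rs n)
    = mat_adjoint (Lprod D Rs n) * transfer q Ob (Vs n) X * Lprod D Rs n"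
  using X
proof (induction n arbitrary: X)
  case 0
  have "dim_col (Vs 0) = D"
    using QR[of 0] by (auto simp: is_QR_def is_opmat_def opmat_times_mat_def)
  then show ?case using 0 transfer_carrier[of q Ob "Vs 0" X] by simp
next
  case (Suc n)
  let ?L = "Lprod D Rs n" and ?R = "Rs (Suc n)"
  have Q: "is_opmat q D D (Qs (Suc n))" and Vn: "Vs n = opmat_times_mat q (Qs (Suc n)) ?R"
    using QR[of n] by (auto simp: is_QR_def)
  have "transfer q Ob (Vs 0) (mat_adjoint (?R * ?L) * X * (?R * ?L))
      = transfer q Ob (Vs 0) (mat_adjoint ?L * (mat_adjoint ?R * X * ?R) * ?L)"
    by (simp add: mat_adjoint_sandwich_mult[OF Rs_carrier Lprod_carrier Suc.prems])
  also have "\<dots> = mat_adjoint ?L * transfer q Ob (Vs n) (mat_adjoint ?R * X * ?R) * ?L"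
    using Suc Rs_carrier by (simp add: mult_carrier_mat[of _ D D _ D])
  also have "\<dots> = mat_adjoint ?L * (mat_adjoint ?R * transfer q Ob (Vs (Suc n)) X * ?R) * ?L"
    unfolding Vn RQ by (simp add: transfer_QR_conj[OF onb Q Rs_carrier Suc.prems])
  also have "\<dots> = mat_adjoint (?R * ?L) * transfer q Ob (Vs (Suc n)) X * (?R * ?L)"
  proof -
    have "dim_col (Vs (Suc n)) = D"
      using Q by (simp add: RQ mat_times_opmat_def is_opmatD(2))
    then have "transfer q Ob (Vs (Suc n)) X \<in> carrier_mat D D"
      using transfer_carrier[of q Ob "Vs (Suc n)" X] by simp
    then show ?thesis
      by (simp add: mat_adjoint_sandwich_mult[OF Rs_carrier Lprod_carrier])
  qed
  finally show ?case by simp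
qed

lemma transfer_Vs_one: "transfer q Ob (Vs n) (1\<^sub>m D) = mat_adjoint (Rs (Suc n)) * Rs (Suc n)"
proof -
  have Q: "is_opmat q D D (Qs (Suc n))" and "orthonormal_cols q (Qs (Suc n))"
    and Vn: "Vs n = opmat_times_mat q (Qs (Suc n)) (Rs (Suc n))"
    using QR[of n] by (auto simp: is_QR_def)
  then show ?thesis
    using Rs_carrier[of n]
    by (simp add: right_mult_one_mat[OF mat_adjoint_carrier[OF Rs_carrier[of n]]]
        transfer_opmat_times_mat[OF onb Q] transfer_orthonormal_cols_one[OF q_pos onb Q])
qed

lemma transfer_funpow_one: "(transfer q Ob (Vs 0) ^^ n) (1\<^sub>m D) = mat_adjoint (Lprod D Rs n) * Lprod D Rs n"
proof (induction n)
  case (Suc n)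
  let ?L = "Lprod D Rs n" and ?R = "Rs (Suc n)"
  have "(transfer q Ob (Vs 0) ^^ Suc n) (1\<^sub>m D) = transfer q Ob (Vs 0) (mat_adjoint ?L * 1\<^sub>m D * ?L)"
    using Suc mat_adjoint_carrier[OF Lprod_carrier[of n]] by simp
  also have "\<dots> = mat_adjoint ?L * (mat_adjoint ?R * ?R) * ?L"
    by (simp add: transfer_Lprod_conj transfer_Vs_one)
  also have "\<dots> = mat_adjoint (?R * ?L) * (?R * ?L)"
    using mat_adjoint_sandwich_mult[OF Rs_carrier[of n] Lprod_carrier[of n] one_carrier_mat]
    by (simp add: right_mult_one_mat[OF mat_adjoint_carrier[OF Rs_carrier[of n]]]
        right_mult_one_mat[OF mat_adjoint_carrier[OF mult_carrier_mat[OF Rs_carrier[of n] Lprod_carrier[of n]]]])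
  finally show ?case by simp
qed simp

end

theorem lemma6:
  fixes q \<chi> :: nat and Ob :: "nat \<Rightarrow> complex mat" and V :: opmat
    and Vs Qs :: "nat \<Rightarrow> opmat" and Rs :: "nat \<Rightarrow> complex mat"
  assumes "q \<ge> 1"
    and "op_onb q Ob"
    and "regular_upper_block q \<chi> V"
    and "Vs 0 = V"
    and "\<And>n. n \<ge> 1 \<Longrightarrow> is_QR q (1+\<chi>) (Vs (n-1)) (Qs n) (Rs n)"
    and "\<And>n. n \<ge> 1 \<Longrightarrow> Vs n = mat_times_opmat q (Rs n) (Qs n)"
  shows "\<forall>n. (transfer q Ob V ^^ n) (1\<^sub>m (1+\<chi>)) = mat_adjoint (Lprod (1+\<chi>) Rs n) * Lprod (1+\<chi>) Rs n"
proof -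
  interpret QR_iteration q "1+\<chi>" Ob Vs Qs Rs
    using assms(1,2) assms(5,6)[of "Suc _"] by unfold_locales simp_all
  have "(transfer q Ob V ^^ n) (1\<^sub>m (1+\<chi>)) = mat_adjoint (Lprod (1+\<chi>) Rs n) * Lprod (1+\<chi>) Rs n" for n
    using transfer_funpow_one[of n] unfolding assms(4) .
  then show ?thesis by blast
qed

end
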